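(* Let $\Omega\subset\mathbb{R}^n$ be a bounded domain that is star-shaped with respect to a point $x^*\in\Omega$, let $g\in C(\Omega)$, and let $u=SS^+(g)$ be the upper star-shaped envelope of $g$ with respect to $x^*$. Then $u$ is the viscosity solution of the obstacle problem \[ \min\{u(x)-g(x),\ (x-x^* )\cdot\nabla u(x)\}=0 \quad\text{in }\Omega, \] together with $u(x^* )=g(x^* )$.
   Context: A set $S$ is star-shaped with respect to $x^*$ if $x\in S$ implies $tx^*+(1-t)x\in S$ for all $t\in[0,1]$; a function $v:\Omega\to\mathbb{R}$ is star-shaped with respect to $x^*$ if all its sublevel sets $\{v\le\alpha\}$ are. $SS^+(g)(x)=\inf\{v(x)\mid v:\Omega\to\mathbb{R}\text{ star-shaped w.r.t. } x^*,\ v\ge g\}$. For $F(x,r,p)$, an upper (lower) semicontinuous $u$ is a viscosity subsolution (supersolution) of $F[u]=0$ in $\Omega$ if for every $\phi\in C^1(\Omega)$, whenever $u-\phi$ has a local maximum (minimum) at $x\in\Omega$, $F(x,u(x),\nabla\phi(x))\le 0$ ($\ge 0$); a viscosity solution is both. Here $F(x,r,p)=\min\{r-g(x),(x-x^* )\cdot p\}$. *)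

theory Defs
  imports "HOL-Analysis.Analysis"
begin

definition star_shaped_set :: "'a::real_vector set \<Rightarrow> 'a \<Rightarrow> bool" where
  "star_shaped_set S xs \<longleftrightarrow>
     (\<forall>x\<in>S. \<forall>t::real. 0 \<le> t \<and> t \<le> 1 \<longrightarrow> t *\<^sub>R xs + (1 - t) *\<^sub>R x \<in> S)"

definition star_shaped_fun :: "'a::real_vector set \<Rightarrow> 'a \<Rightarrow> ('a \<Rightarrow> real) \<Rightarrow> bool" where
  "star_shaped_fun \<Omega> xs v \<longleftrightarrow> (\<forall>\<alpha>. star_shaped_set {x\<in>\<Omega>. v x \<le> \<alpha>} xs)"

definition SS_plus :: "'a::real_vector set \<Rightarrow> 'a \<Rightarrow> ('a \<Rightarrow> real) \<Rightarrow> 'a \<Rightarrow> real" where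
  "SS_plus \<Omega> xs g x =
     Inf {v x | v. star_shaped_fun \<Omega> xs v \<and> (\<forall>y\<in>\<Omega>. g y \<le> v y)}"

definition usc_on :: "'a::topological_space set \<Rightarrow> ('a \<Rightarrow> real) \<Rightarrow> bool" where
  "usc_on \<Omega> u \<longleftrightarrow> (\<forall>x\<in>\<Omega>. \<forall>a. u x < a \<longrightarrow> eventually (\<lambda>y. u y < a) (at x within \<Omega>))"

definition lsc_on :: "'a::topological_space set \<Rightarrow> ('a \<Rightarrow> real) \<Rightarrow> bool" where
  "lsc_on \<Omega> u \<longleftrightarrow> (\<forall>x\<in>\<Omega>. \<forall>a. a < u x \<longrightarrow> eventually (\<lambda>y. a < u y) (at x within \<Omega>))"

definition C1_grad :: "'a::euclidean_space set \<Rightarrow> ('a \<Rightarrow> real) \<Rightarrow> ('a \<Rightarrow> 'a) \<Rightarrow> bool" where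
  "C1_grad \<Omega> \<phi> D\<phi> \<longleftrightarrow>
     (\<forall>x\<in>\<Omega>. (\<phi> has_derivative (\<lambda>h. D\<phi> x \<bullet> h)) (at x)) \<and> continuous_on \<Omega> D\<phi>"

definition local_max_on :: "'a::metric_space set \<Rightarrow> ('a \<Rightarrow> real) \<Rightarrow> 'a \<Rightarrow> bool" where
  "local_max_on \<Omega> w x \<longleftrightarrow> (\<exists>e>0. \<forall>y\<in>\<Omega> \<inter> ball x e. w y \<le> w x)"

definition local_min_on :: "'a::metric_space set \<Rightarrow> ('a \<Rightarrow> real) \<Rightarrow> 'a \<Rightarrow> bool" where
  "local_min_on \<Omega> w x \<longleftrightarrow> (\<exists>e>0. \<forall>y\<in>\<Omega> \<inter> ball x e. w x \<le> w y)"

definition visc_subsol ::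
  "'a::euclidean_space set \<Rightarrow> ('a \<Rightarrow> real \<Rightarrow> 'a \<Rightarrow> real) \<Rightarrow> ('a \<Rightarrow> real) \<Rightarrow> bool" where
  "visc_subsol \<Omega> F u \<longleftrightarrow> usc_on \<Omega> u \<and>
     (\<forall>\<phi> D\<phi> x. C1_grad \<Omega> \<phi> D\<phi> \<and> x \<in> \<Omega> \<and> local_max_on \<Omega> (\<lambda>y. u y - \<phi> y) x
        \<longrightarrow> F x (u x) (D\<phi> x) \<le> 0)"

definition visc_supersol ::
  "'a::euclidean_space set \<Rightarrow> ('a \<Rightarrow> real \<Rightarrow> 'a \<Rightarrow> real) \<Rightarrow> ('a \<Rightarrow> real) \<Rightarrow> bool" where
  "visc_supersol \<Omega> F u \<longleftrightarrow> lsc_on \<Omega> u \<and>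
     (\<forall>\<phi> D\<phi> x. C1_grad \<Omega> \<phi> D\<phi> \<and> x \<in> \<Omega> \<and> local_min_on \<Omega> (\<lambda>y. u y - \<phi> y) x
        \<longrightarrow> F x (u x) (D\<phi> x) \<ge> 0)"

definition visc_sol ::
  "'a::euclidean_space set \<Rightarrow> ('a \<Rightarrow> real \<Rightarrow> 'a \<Rightarrow> real) \<Rightarrow> ('a \<Rightarrow> real) \<Rightarrow> bool" where
  "visc_sol \<Omega> F u \<longleftrightarrow> visc_subsol \<Omega> F u \<and> visc_supersol \<Omega> F u"

definition F_obst :: "('a::euclidean_space \<Rightarrow> real) \<Rightarrow> 'a \<Rightarrow> 'a \<Rightarrow> real \<Rightarrow> 'a \<Rightarrow> real" where
  "F_obst g xs x r p = min (r - g x) ((x - xs) \<bullet> p)"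

end

theory Submission
  imports Defs
begin

text \<open>
  On a star-shaped domain the envelope is explicit: SS+(g)(x) is the maximum of g over the
  segment [x*, x]. This function u is continuous, lies above g, and is nondecreasing along
  every ray leaving x*; the monotonicity yields (x - x*) . D phi(x) >= 0 wherever u - phi has
  a local minimum. Where u(x) > g(x) the maximum is attained strictly between x* and x, so u is
  constant on the piece of the ray just inside x, which yields (x - x*) . D phi(x) <= 0 wherever
  u - phi has a local maximum.
\<close>

definition segment_sup :: "'a::real_vector \<Rightarrow> ('a \<Rightarrow> real) \<Rightarrow> 'a \<Rightarrow> real" where
  "segment_sup a g x = (SUP y\<in>closed_segment a x. g y)"

lemma star_shaped_set_closed_segment_subset:
  assumes "star_shaped_set S a" "x \<in> S"
  shows "closed_segment a x \<subseteq> S"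
proof
  fix y assume "y \<in> closed_segment a x"
  then obtain u where u: "0 \<le> u" "u \<le> 1" "y = (1 - u) *\<^sub>R a + u *\<^sub>R x"
    by (auto simp: in_segment)
  from assms have "\<forall>t. 0 \<le> t \<and> t \<le> 1 \<longrightarrow> t *\<^sub>R a + (1 - t) *\<^sub>R x \<in> S"
    unfolding star_shaped_set_def by blast
  then show "y \<in> S" using u by (auto dest: spec[of _ "1 - u"])
qed

lemma continuous_on_closed_segment_if_star_shaped:
  assumes "star_shaped_set \<Omega> a" "continuous_on \<Omega> g" "x \<in> \<Omega>"
  shows "continuous_on (closed_segment a x) g"
  using continuous_on_subset[OF assms(2) star_shaped_set_closed_segment_subset[OF assms(1,3)]] .

lemma inward_point_in_closed_segment:
  "0 \<le> t \<Longrightarrow> t \<le> 1 \<Longrightarrow> x + t *\<^sub>R (a - x) \<in> closed_segment a x"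
  unfolding in_segment by (rule exI[of _ "1 - t"]) (auto simp: algebra_simps)

lemma eventually_closed_segment_inward:
  assumes "z \<in> closed_segment a x" "z \<noteq> x"
  shows "\<forall>\<^sub>F t in at_right 0. z \<in> closed_segment a (x + t *\<^sub>R (a - x))"
proof -
  obtain u where u: "0 \<le> u" "u \<le> 1" "z = (1 - u) *\<^sub>R a + u *\<^sub>R x"
    using assms(1) by (auto simp: in_segment)
  with assms(2) have "u < 1" by (cases "u = 1") auto
  have mem: "z \<in> closed_segment a (x + t *\<^sub>R (a - x))" if t: "0 < t" "t < 1 - u" for t
    unfolding in_segment
  proof (intro exI[of _ "u / (1 - t)"] conjI)
    show "0 \<le> u / (1 - t)" "u / (1 - t) \<le> 1" using u t by auto
    define c where "c = u / (1 - t)"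
    have "c * (1 - t) = u" using t u by (simp add: c_def)
    moreover have "(1 - c) *\<^sub>R a + c *\<^sub>R (x + t *\<^sub>R (a - x))
        = (1 - c * (1 - t)) *\<^sub>R a + (c * (1 - t)) *\<^sub>R x"
      by (simp add: algebra_simps)
    ultimately show "z = (1 - c) *\<^sub>R a + c *\<^sub>R (x + t *\<^sub>R (a - x))"
      using u(3) by simp
  qed
  from \<open>u < 1\<close> have "0 < 1 - u" by simp
  show ?thesis
    using eventually_at_right_real[OF \<open>0 < 1 - u\<close>] by eventually_elim (simp add: mem)
qed

lemma eventually_at_right_line_in_open:
  fixes x v :: "'a::real_normed_vector"
  assumes "open S" "x \<in> S"
  shows "\<forall>\<^sub>F t in at_right 0. x + t *\<^sub>R v \<in> S"
proof -
  have "((\<lambda>t. x + t *\<^sub>R v) \<longlongrightarrow> x + 0 *\<^sub>R v) (at_right 0)"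
    by (intro tendsto_intros)
  then show ?thesis using assms by (simp add: topological_tendstoD)
qed

lemma bdd_above_closed_segment_image:
  fixes g :: "'a::real_normed_vector \<Rightarrow> real"
  assumes "continuous_on (closed_segment a x) g"
  shows "bdd_above (g ` closed_segment a x)"
  using assms by (intro bounded_imp_bdd_above compact_imp_bounded compact_continuous_image) auto

lemma segment_sup_param: "segment_sup a g x = (SUP s\<in>{0..1}. g ((1 - s) *\<^sub>R a + s *\<^sub>R x))"
  unfolding segment_sup_def closed_segment_image_interval image_image ..

lemma segment_sup_upper:
  fixes g :: "'a::real_normed_vector \<Rightarrow> real"
  assumes "continuous_on (closed_segment a x) g" "y \<in> closed_segment a x"
  shows "g y \<le> segment_sup a g x"
  unfolding segment_sup_def
  using cSUP_upper[OF assms(2) bdd_above_closed_segment_image[OF assms(1)]] .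

lemma segment_sup_attained:
  fixes g :: "'a::real_normed_vector \<Rightarrow> real"
  assumes "continuous_on (closed_segment a x) g"
  obtains z where "z \<in> closed_segment a x" "g z = segment_sup a g x"
proof -
  obtain z where z: "z \<in> closed_segment a x" "\<forall>y\<in>closed_segment a x. g y \<le> g z"
    using continuous_attains_sup[OF compact_segment closed_segment_neq_empty assms] by blast
  then have "g z = segment_sup a g x"
    unfolding segment_sup_def by (intro cSup_eq_maximum[symmetric]) auto
  with z that show ?thesis by blast
qed

lemma segment_sup_mono:
  fixes g :: "'a::real_normed_vector \<Rightarrow> real"
  assumes "continuous_on (closed_segment a x) g" "y \<in> closed_segment a x"
  shows "segment_sup a g y \<le> segment_sup a g x"
proof -
  have sub: "closed_segment a y \<subseteq> closed_segment a x"
    using assms(2) by (simp add: subset_closed_segment)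
  obtain z where "z \<in> closed_segment a y" "g z = segment_sup a g y"
    using segment_sup_attained[OF continuous_on_subset[OF assms(1) sub]] .
  with sub show ?thesis using segment_sup_upper[OF assms(1)] by force
qed

lemma eventually_segment_sup_inward_ge:
  fixes g :: "'a::real_normed_vector \<Rightarrow> real"
  assumes g: "continuous_on (closed_segment a x) g" and gx: "g x < segment_sup a g x"
  shows "\<forall>\<^sub>F t in at_right 0. segment_sup a g x \<le> segment_sup a g (x + t *\<^sub>R (a - x))"
proof -
  obtain z where z: "z \<in> closed_segment a x" "g z = segment_sup a g x"
    using segment_sup_attained[OF g] .
  with gx have "z \<noteq> x" by auto
  have ge: "segment_sup a g x \<le> segment_sup a g (x + t *\<^sub>R (a - x))"
    if t: "t \<in> {0<..<1}" and zt: "z \<in> closed_segment a (x + t *\<^sub>R (a - x))" for t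
  proof -
    have "x + t *\<^sub>R (a - x) \<in> closed_segment a x"
      using t by (intro inward_point_in_closed_segment) auto
    then have "closed_segment a (x + t *\<^sub>R (a - x)) \<subseteq> closed_segment a x"
      by (simp add: subset_closed_segment)
    then show ?thesis
      using segment_sup_upper[OF continuous_on_subset[OF g] zt] z(2) by simp
  qed
  show ?thesis
    using eventually_at_right_real[OF zero_less_one] eventually_closed_segment_inward[OF z(1) \<open>z \<noteq> x\<close>]
    by eventually_elim (rule ge)
qed

lemma SUP_abs_diff_le:
  fixes f h :: "'b \<Rightarrow> real"
  assumes "A \<noteq> {}" "bdd_above (f ` A)" "bdd_above (h ` A)" "\<forall>y\<in>A. \<bar>f y - h y\<bar> \<le> e"
  shows "\<bar>(SUP y\<in>A. f y) - (SUP y\<in>A. h y)\<bar> \<le> e"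
proof -
  have "(SUP y\<in>A. f y) \<le> (SUP y\<in>A. h y) + e"
  proof (rule cSUP_least[OF assms(1)])
    fix y assume "y \<in> A"
    then have "f y \<le> h y + e" "h y \<le> (SUP y\<in>A. h y)"
      using assms(4) cSUP_upper[OF _ assms(3)] by auto
    then show "f y \<le> (SUP y\<in>A. h y) + e" by linarith
  qed
  moreover have "(SUP y\<in>A. h y) \<le> (SUP y\<in>A. f y) + e"
  proof (rule cSUP_least[OF assms(1)])
    fix y assume "y \<in> A"
    then have "h y \<le> f y + e" "f y \<le> (SUP y\<in>A. f y)"
      using assms(4) cSUP_upper[OF _ assms(2)] by auto
    then show "h y \<le> (SUP y\<in>A. f y) + e" by linarith
  qed
  ultimately show ?thesis by linarith
qed

lemma continuous_on_segment_sup: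
  fixes g :: "'a::euclidean_space \<Rightarrow> real"
  assumes \<Omega>: "open \<Omega>" and star: "star_shaped_set \<Omega> a" and g: "continuous_on \<Omega> g"
  shows "continuous_on \<Omega> (segment_sup a g)"
  unfolding continuous_on_iff
proof (intro ballI allI impI)
  fix x and e :: real assume x: "x \<in> \<Omega>" and e: "0 < e"
  obtain r where r: "r > 0" "cball x r \<subseteq> \<Omega>"
    using open_contains_cball \<Omega> x by blast
  define G where "G = (\<lambda>(s, y). g ((1 - s) *\<^sub>R a + s *\<^sub>R y))"
  have "(1 - s) *\<^sub>R a + s *\<^sub>R y \<in> \<Omega>" if "s \<in> {0..1}" "y \<in> cball x r" for s y
  proof -
    have "(1 - s) *\<^sub>R a + s *\<^sub>R y \<in> closed_segment a y"
      using that(1) by (auto simp: closed_segment_image_interval)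
    then show ?thesis
      using star_shaped_set_closed_segment_subset[OF star] r(2) that(2) by blast
  qed
  then have "continuous_on ({0..1} \<times> cball x r) G"
    unfolding G_def case_prod_unfold
    by (intro continuous_on_compose2[OF g]) (auto intro!: continuous_intros)
  then have "uniformly_continuous_on ({0..1} \<times> cball x r) G"
    by (intro compact_uniformly_continuous compact_Times) auto
  moreover have "e / 2 > 0" using e by simp
  ultimately obtain d where d: "d > 0"
    "\<forall>p\<in>{0..1} \<times> cball x r. \<forall>q\<in>{0..1} \<times> cball x r. dist q p < d \<longrightarrow> dist (G q) (G p) < e / 2"
    unfolding uniformly_continuous_on_def by blast
  have bdd: "bdd_above ((\<lambda>s. G (s, y)) ` {0..1})" if "y \<in> \<Omega>" for y
    using bdd_above_closed_segment_image[OF continuous_on_closed_segment_if_star_shaped[OF star g that]]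
    by (simp add: G_def closed_segment_image_interval image_image)
  show "\<exists>d>0. \<forall>y\<in>\<Omega>. dist y x < d \<longrightarrow> dist (segment_sup a g y) (segment_sup a g x) < e"
  proof (intro exI[of _ "min r d"] conjI ballI impI)
    fix y assume y: "y \<in> \<Omega>" "dist y x < min r d"
    have "\<bar>G (s, y) - G (s, x)\<bar> \<le> e / 2" if "s \<in> {0..1}" for s
    proof -
      have "(s, x) \<in> {0..1} \<times> cball x r" "(s, y) \<in> {0..1} \<times> cball x r"
        using that r(1) y(2) by (auto simp: dist_commute)
      moreover have "dist (s, y) (s, x) < d"
        using y(2) by (simp add: dist_Pair_Pair)
      ultimately have "dist (G (s, y)) (G (s, x)) < e / 2"
        using d(2) by blast
      then show ?thesis by (simp add: dist_real_def)
    qed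
    then have "\<bar>(SUP s\<in>{0..1}. G (s, y)) - (SUP s\<in>{0..1}. G (s, x))\<bar> \<le> e / 2"
      by (intro SUP_abs_diff_le bdd y(1) x) auto
    moreover have "segment_sup a g z = (SUP s\<in>{0..1}. G (s, z))" for z
      by (simp add: segment_sup_param G_def)
    ultimately show "dist (segment_sup a g y) (segment_sup a g x) < e"
      using e by (simp add: dist_real_def)
  qed (use r d in auto)
qed

lemma star_shaped_fun_segment_sup:
  fixes g :: "'a::real_normed_vector \<Rightarrow> real"
  assumes star: "star_shaped_set \<Omega> a" and g: "continuous_on \<Omega> g"
  shows "star_shaped_fun \<Omega> a (segment_sup a g)"
  unfolding star_shaped_fun_def star_shaped_set_def
proof (intro allI ballI impI)
  fix \<alpha> y and t :: real
  assume y: "y \<in> {x \<in> \<Omega>. segment_sup a g x \<le> \<alpha>}" and t: "0 \<le> t \<and> t \<le> 1"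
  let ?w = "t *\<^sub>R a + (1 - t) *\<^sub>R y"
  have w: "?w \<in> closed_segment a y"
    unfolding in_segment using t by (intro exI[of _ "1 - t"]) auto
  then have "?w \<in> \<Omega>"
    using star_shaped_set_closed_segment_subset[OF star] y by blast
  moreover have "segment_sup a g ?w \<le> segment_sup a g y"
    using segment_sup_mono[OF continuous_on_closed_segment_if_star_shaped[OF star g] w] y by blast
  ultimately show "?w \<in> {x \<in> \<Omega>. segment_sup a g x \<le> \<alpha>}"
    using y by auto
qed

lemma SS_plus_eq_segment_sup:
  fixes g :: "'a::real_normed_vector \<Rightarrow> real"
  assumes star: "star_shaped_set \<Omega> a" and g: "continuous_on \<Omega> g" and x: "x \<in> \<Omega>"
  shows "SS_plus \<Omega> a g x = segment_sup a g x"
  unfolding SS_plus_def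
proof (rule cInf_eq_minimum)
  have "\<forall>y\<in>\<Omega>. g y \<le> segment_sup a g y"
    using segment_sup_upper[OF continuous_on_closed_segment_if_star_shaped[OF star g]] by blast
  then show "segment_sup a g x \<in> {v x |v. star_shaped_fun \<Omega> a v \<and> (\<forall>y\<in>\<Omega>. g y \<le> v y)}"
    using star_shaped_fun_segment_sup[OF star g] by blast
next
  fix r assume "r \<in> {v x |v. star_shaped_fun \<Omega> a v \<and> (\<forall>y\<in>\<Omega>. g y \<le> v y)}"
  then obtain v where r: "r = v x" and v: "star_shaped_fun \<Omega> a v" "\<forall>y\<in>\<Omega>. g y \<le> v y"
    by auto
  obtain z where z: "z \<in> closed_segment a x" "g z = segment_sup a g x"
    using segment_sup_attained[OF continuous_on_closed_segment_if_star_shaped[OF star g x]] .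
  have "closed_segment a x \<subseteq> {y \<in> \<Omega>. v y \<le> v x}"
    using v(1) x unfolding star_shaped_fun_def
    by (intro star_shaped_set_closed_segment_subset) auto
  with z v(2) r show "segment_sup a g x \<le> r" by force
qed

lemma SS_plus_center:
  fixes g :: "'a::real_normed_vector \<Rightarrow> real"
  assumes "star_shaped_set \<Omega> a" "continuous_on \<Omega> g" "a \<in> \<Omega>"
  shows "SS_plus \<Omega> a g a = g a"
  using SS_plus_eq_segment_sup[OF assms] by (simp add: segment_sup_def)

lemma continuous_on_SS_plus:
  fixes g :: "'a::euclidean_space \<Rightarrow> real"
  assumes "open \<Omega>" "star_shaped_set \<Omega> a" "continuous_on \<Omega> g"
  shows "continuous_on \<Omega> (SS_plus \<Omega> a g)"
  using continuous_on_segment_sup[OF assms] SS_plus_eq_segment_sup[OF assms(2,3)]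
  by (simp cong: continuous_on_cong)

lemma continuous_on_imp_usc_on: "continuous_on \<Omega> u \<Longrightarrow> usc_on \<Omega> u"
  unfolding usc_on_def continuous_on_def by (blast intro: order_tendstoD)

lemma continuous_on_imp_lsc_on: "continuous_on \<Omega> u \<Longrightarrow> lsc_on \<Omega> u"
  unfolding lsc_on_def continuous_on_def by (blast intro: order_tendstoD)

lemma directional_derivative_nonneg:
  fixes \<phi> :: "'a::real_normed_vector \<Rightarrow> real"
  assumes \<phi>: "(\<phi> has_derivative \<phi>') (at x)"
    and incr: "\<forall>\<^sub>F t in at_right 0. \<phi> x \<le> \<phi> (x + t *\<^sub>R v)"
  shows "0 \<le> \<phi>' v"
proof -
  have "((\<lambda>t. x + t *\<^sub>R v) has_derivative (\<lambda>t. t *\<^sub>R v)) (at 0)"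
    by (auto intro!: derivative_eq_intros)
  moreover have "(\<phi> has_derivative \<phi>') (at (x + 0 *\<^sub>R v))"
    using \<phi> by simp
  ultimately have "((\<lambda>t. \<phi> (x + t *\<^sub>R v)) has_derivative (\<lambda>t. \<phi>' (t *\<^sub>R v))) (at 0)"
    by (rule has_derivative_compose[of "\<lambda>t. x + t *\<^sub>R v", unfolded o_def])
  moreover have "(\<lambda>t. \<phi>' (t *\<^sub>R v)) = (*) (\<phi>' v)"
    using has_derivative_bounded_linear[OF \<phi>] by (simp add: linear_simps fun_eq_iff)
  ultimately have "((\<lambda>t. \<phi> (x + t *\<^sub>R v)) has_field_derivative \<phi>' v) (at 0 within {0<..})"
    unfolding has_field_derivative_def by (simp add: has_derivative_at_withinI)
  then have "((\<lambda>t. (\<phi> (x + t *\<^sub>R v) - \<phi> x) / t) \<longlongrightarrow> \<phi>' v) (at_right 0)"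
    by (simp add: has_field_derivative_iff)
  moreover have "\<forall>\<^sub>F t in at_right 0. 0 \<le> (\<phi> (x + t *\<^sub>R v) - \<phi> x) / t"
    using incr eventually_at_right_less by eventually_elim simp
  ultimately show ?thesis by (rule tendsto_lowerbound) simp
qed

lemma local_max_on_directional_derivative_nonneg:
  fixes u \<phi> :: "'a::real_normed_vector \<Rightarrow> real"
  assumes "open \<Omega>" "x \<in> \<Omega>" "local_max_on \<Omega> (\<lambda>y. u y - \<phi> y) x" "(\<phi> has_derivative \<phi>') (at x)"
    and incr: "\<forall>\<^sub>F t in at_right 0. u x \<le> u (x + t *\<^sub>R v)"
  shows "0 \<le> \<phi>' v"
proof -
  obtain e where e: "e > 0" "\<forall>y\<in>\<Omega> \<inter> ball x e. u y - \<phi> y \<le> u x - \<phi> x"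
    using assms(3) unfolding local_max_on_def by blast
  have near: "\<forall>\<^sub>F t in at_right 0. x + t *\<^sub>R v \<in> \<Omega> \<inter> ball x e"
    using assms(1,2) e(1) by (intro eventually_at_right_line_in_open) auto
  have "\<phi> x \<le> \<phi> y" if "u x \<le> u y" "y \<in> \<Omega> \<inter> ball x e" for y
    using bspec[OF e(2) that(2)] that(1) by linarith
  with incr near have "\<forall>\<^sub>F t in at_right 0. \<phi> x \<le> \<phi> (x + t *\<^sub>R v)"
    by (auto elim: eventually_elim2)
  then show ?thesis by (rule directional_derivative_nonneg[OF assms(4)])
qed

lemma local_min_on_directional_derivative_nonpos:
  fixes u \<phi> :: "'a::real_normed_vector \<Rightarrow> real"
  assumes "open \<Omega>" "x \<in> \<Omega>" "local_min_on \<Omega> (\<lambda>y. u y - \<phi> y) x" "(\<phi> has_derivative \<phi>') (at x)"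
    and decr: "\<forall>\<^sub>F t in at_right 0. u (x + t *\<^sub>R v) \<le> u x"
  shows "\<phi>' v \<le> 0"
proof -
  obtain e where e: "e > 0" "\<forall>y\<in>\<Omega> \<inter> ball x e. u x - \<phi> x \<le> u y - \<phi> y"
    using assms(3) unfolding local_min_on_def by blast
  have "local_max_on \<Omega> (\<lambda>y. - u y - - \<phi> y) x"
    unfolding local_max_on_def
  proof (intro exI[of _ e] conjI ballI)
    fix y assume "y \<in> \<Omega> \<inter> ball x e"
    with e(2) show "- u y - - \<phi> y \<le> - u x - - \<phi> x" by force
  qed (rule e(1))
  moreover have "\<forall>\<^sub>F t in at_right 0. - u x \<le> - u (x + t *\<^sub>R v)"
    using decr by simp
  ultimately have "0 \<le> - \<phi>' v"
    by (rule local_max_on_directional_derivative_nonneg[OF assms(1,2) _ has_derivative_minus[OF assms(4)]])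
  then show ?thesis by simp
qed

lemma SS_plus_visc_subsol:
  fixes g :: "'a::euclidean_space \<Rightarrow> real"
  assumes \<Omega>: "open \<Omega>" and star: "star_shaped_set \<Omega> a" and g: "continuous_on \<Omega> g"
  shows "visc_subsol \<Omega> (F_obst g a) (SS_plus \<Omega> a g)"
  unfolding visc_subsol_def
proof (intro conjI allI impI)
  let ?u = "SS_plus \<Omega> a g"
  show "usc_on \<Omega> ?u"
    by (intro continuous_on_imp_usc_on continuous_on_SS_plus assms)
  fix \<phi> D\<phi> x
  assume test: "C1_grad \<Omega> \<phi> D\<phi> \<and> x \<in> \<Omega> \<and> local_max_on \<Omega> (\<lambda>y. ?u y - \<phi> y) x"
  then have x: "x \<in> \<Omega>" and D\<phi>: "(\<phi> has_derivative (\<lambda>h. D\<phi> x \<bullet> h)) (at x)"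
    unfolding C1_grad_def by auto
  show "F_obst g a x (?u x) (D\<phi> x) \<le> 0"
  proof (cases "?u x \<le> g x")
    case True
    then show ?thesis unfolding F_obst_def by simp
  next
    case False
    then have "g x < segment_sup a g x"
      using SS_plus_eq_segment_sup[OF star g x] by simp
    then have "\<forall>\<^sub>F t in at_right 0. segment_sup a g x \<le> segment_sup a g (x + t *\<^sub>R (a - x))"
      by (rule eventually_segment_sup_inward_ge[OF continuous_on_closed_segment_if_star_shaped[OF star g x]])
    moreover have "\<forall>\<^sub>F t in at_right 0. x + t *\<^sub>R (a - x) \<in> \<Omega>"
      by (rule eventually_at_right_line_in_open[OF \<Omega> x])
    ultimately have "\<forall>\<^sub>F t in at_right 0. ?u x \<le> ?u (x + t *\<^sub>R (a - x))"
      by eventually_elim (simp add: SS_plus_eq_segment_sup[OF star g] x)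
    with local_max_on_directional_derivative_nonneg[OF \<Omega> x _ D\<phi>] test have "0 \<le> D\<phi> x \<bullet> (a - x)"
      by blast
    then show ?thesis
      unfolding F_obst_def by (simp add: inner_diff_left inner_diff_right inner_commute)
  qed
qed

lemma SS_plus_visc_supersol:
  fixes g :: "'a::euclidean_space \<Rightarrow> real"
  assumes \<Omega>: "open \<Omega>" and star: "star_shaped_set \<Omega> a" and g: "continuous_on \<Omega> g"
  shows "visc_supersol \<Omega> (F_obst g a) (SS_plus \<Omega> a g)"
  unfolding visc_supersol_def
proof (intro conjI allI impI)
  let ?u = "SS_plus \<Omega> a g"
  show "lsc_on \<Omega> ?u"
    by (intro continuous_on_imp_lsc_on continuous_on_SS_plus assms)
  fix \<phi> D\<phi> x
  assume test: "C1_grad \<Omega> \<phi> D\<phi> \<and> x \<in> \<Omega> \<and> local_min_on \<Omega> (\<lambda>y. ?u y - \<phi> y) x"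
  then have x: "x \<in> \<Omega>" and D\<phi>: "(\<phi> has_derivative (\<lambda>h. D\<phi> x \<bullet> h)) (at x)"
    unfolding C1_grad_def by auto
  have seg: "continuous_on (closed_segment a x) g"
    using continuous_on_closed_segment_if_star_shaped[OF star g x] .
  have "?u (x + t *\<^sub>R (a - x)) \<le> ?u x" if "t \<in> {0<..<1}" for t
  proof -
    have y: "x + t *\<^sub>R (a - x) \<in> closed_segment a x"
      using that by (intro inward_point_in_closed_segment) auto
    then have "x + t *\<^sub>R (a - x) \<in> \<Omega>"
      using star_shaped_set_closed_segment_subset[OF star x] by blast
    then show ?thesis
      using segment_sup_mono[OF seg y] by (simp add: SS_plus_eq_segment_sup[OF star g] x)
  qed
  then have "\<forall>\<^sub>F t in at_right 0. ?u (x + t *\<^sub>R (a - x)) \<le> ?u x"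
    using eventually_at_right_real[OF zero_less_one] by (auto elim: eventually_mono)
  with local_min_on_directional_derivative_nonpos[OF \<Omega> x _ D\<phi>] test have "D\<phi> x \<bullet> (a - x) \<le> 0"
    by blast
  moreover have "g x \<le> ?u x"
    using segment_sup_upper[OF seg] by (simp add: SS_plus_eq_segment_sup[OF star g x])
  ultimately show "F_obst g a x (?u x) (D\<phi> x) \<ge> 0"
    unfolding F_obst_def by (simp add: inner_diff_left inner_diff_right inner_commute)
qed

theorem proposition3p12:
  fixes \<Omega> :: "'a::euclidean_space set" and xs :: 'a and g :: "'a \<Rightarrow> real"
  assumes "open \<Omega>" and "connected \<Omega>" and "bounded \<Omega>"
    and "xs \<in> \<Omega>" and "star_shaped_set \<Omega> xs"
    and "continuous_on \<Omega> g"
  shows "visc_sol \<Omega> (F_obst g xs) (SS_plus \<Omega> xs g) \<and> SS_plus \<Omega> xs g xs = g xs"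
  using SS_plus_visc_subsol[OF assms(1,5,6)] SS_plus_visc_supersol[OF assms(1,5,6)]
    SS_plus_center[OF assms(5,6,4)]
  unfolding visc_sol_def by blast

end
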